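(* Let $L$ be a latin square of order $n$ on the symbols $\{1,\dots,n\}$ that has no transversal, and let $S\subseteq S_n$ be the set of its rows, regarded as permutations (the row with entries $l_1,\dots,l_n$ in columns $1,\dots,n$ being the permutation $i\mapsto l_i$). Then $\mathrm{cr}(S)=n-2$.
   Context: $S_n$ is the symmetric group on $\{1,\dots,n\}$ with the Hamming distance: the distance between $g,h\in S_n$ is the number of points $i$ with $g(i)\ne h(i)$. The covering radius $\mathrm{cr}(P)$ of a nonempty $P\subseteq S_n$ is the smallest $r$ such that every permutation in $S_n$ is at distance at most $r$ from some element of $P$. A latin square of order $n$ is an $n\times n$ array in which each symbol occurs exactly once in each row and column; a transversal is a set of $n$ cells, one from each row and one from each column, no two containing the same symbol. *)

theory Defs
  imports "HOL-Combinatorics.Permutations"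
begin

definition sym_group :: "nat \<Rightarrow> (nat \<Rightarrow> nat) set" where
  "sym_group n = {g. g permutes {1..n}}"

definition hamming :: "nat \<Rightarrow> (nat \<Rightarrow> nat) \<Rightarrow> (nat \<Rightarrow> nat) \<Rightarrow> nat" where
  "hamming n g h = card {i \<in> {1..n}. g i \<noteq> h i}"

definition covering_radius :: "nat \<Rightarrow> (nat \<Rightarrow> nat) set \<Rightarrow> nat" where
  "covering_radius n P =
     (LEAST r. \<forall>g \<in> sym_group n. \<exists>p \<in> P. hamming n g p \<le> r)"

definition latin_square :: "nat \<Rightarrow> (nat \<Rightarrow> nat \<Rightarrow> nat) \<Rightarrow> bool" where
  "latin_square n L \<longleftrightarrow>
     (\<forall>r \<in> {1..n}. bij_betw (\<lambda>c. L r c) {1..n} {1..n}) \<and>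
     (\<forall>c \<in> {1..n}. bij_betw (\<lambda>r. L r c) {1..n} {1..n})"

definition transversal :: "nat \<Rightarrow> (nat \<Rightarrow> nat \<Rightarrow> nat) \<Rightarrow> (nat \<times> nat) set \<Rightarrow> bool" where
  "transversal n L T \<longleftrightarrow>
     T \<subseteq> {1..n} \<times> {1..n} \<and> card T = n \<and>
     bij_betw fst T {1..n} \<and> bij_betw snd T {1..n} \<and>
     inj_on (\<lambda>(r, c). L r c) T"

definition row_perm :: "nat \<Rightarrow> (nat \<Rightarrow> nat \<Rightarrow> nat) \<Rightarrow> nat \<Rightarrow> nat \<Rightarrow> nat" where
  "row_perm n L r = (\<lambda>i. if i \<in> {1..n} then L r i else i)"

definition row_set :: "nat \<Rightarrow> (nat \<Rightarrow> nat \<Rightarrow> nat) \<Rightarrow> (nat \<Rightarrow> nat) set" where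
  "row_set n L = row_perm n L ` {1..n}"

end

theory Submission
  imports Defs
begin

(* For a permutation g let agreement g t be the number of columns in
   which row t of L agrees with g; then hamming(g, row t) = n - agreement g t.
   Since every column of L contains every symbol exactly once, the agreements of g
   with all rows add up to exactly n.
   Upper bound: if g agreed with every row in at most one column, the cells where L
   agrees with g would form a transversal; so some row agrees with g twice, i.e.
   every g lies within distance n - 2 of S.
   Lower bound: take g minimizing the excess sum_t (agreement g t - 2).  If some row r
   agreed with g in at least three columns, with c one of them, then composing g with
   a suitable transposition (c c') strictly decreases the excess; a counting argument
   based on the agreement sum shows that a suitable c' exists.  Hence the minimizer
   is at distance at least n - 2 from every row. *)

definition agreement :: "nat \<Rightarrow> (nat \<Rightarrow> nat \<Rightarrow> nat) \<Rightarrow> (nat \<Rightarrow> nat) \<Rightarrow> nat \<Rightarrow> nat" where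
  "agreement n L g t = card {i \<in> {1..n}. L t i = g i}"

definition excess :: "nat \<Rightarrow> (nat \<Rightarrow> nat \<Rightarrow> nat) \<Rightarrow> (nat \<Rightarrow> nat) \<Rightarrow> nat" where
  "excess n L g = (\<Sum>t\<in>{1..n}. agreement n L g t - 2)"

lemma latin_row_inj: "latin_square n L \<Longrightarrow> t \<in> {1..n} \<Longrightarrow> inj_on (L t) {1..n}"
  unfolding latin_square_def bij_betw_def by auto

lemma latin_column_bij: "latin_square n L \<Longrightarrow> i \<in> {1..n} \<Longrightarrow> bij_betw (\<lambda>t. L t i) {1..n} {1..n}"
  unfolding latin_square_def by auto

lemma bij_betw_card_fiber:
  assumes "bij_betw f A B" and "x \<in> B"
  shows "card {a \<in> A. f a = x} = 1"
proof -
  obtain a where a: "a \<in> A" "f a = x"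
    using assms by (auto simp: bij_betw_def)
  have "{a \<in> A. f a = x} = {a}"
    using assms(1) a by (auto simp: bij_betw_def dest: inj_onD)
  then show ?thesis by simp
qed

lemma latin_column_fiber:
  assumes "latin_square n L" and "i \<in> {1..n}" and "x \<in> {1..n}"
  shows "card {t \<in> {1..n}. L t i = x} = 1"
  using bij_betw_card_fiber[OF latin_column_bij[OF assms(1,2)] assms(3)] .

lemma hamming_row_perm:
  assumes "t \<in> {1..n}"
  shows "hamming n g (row_perm n L t) = n - agreement n L g t"
proof -
  have "{i \<in> {1..n}. g i \<noteq> row_perm n L t i} = {1..n} - {i \<in> {1..n}. L t i = g i}"
    unfolding row_perm_def by auto
  moreover have "card ({1..n} - {i \<in> {1..n}. L t i = g i}) = n - card {i \<in> {1..n}. L t i = g i}"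
    by (subst card_Diff_subset) auto
  ultimately show ?thesis
    unfolding hamming_def agreement_def by simp
qed

text \<open>Counting a subset as a sum of indicators, to exchange the order of counting.\<close>
lemma card_filter_sum: "finite A \<Longrightarrow> card {i \<in> A. P i} = (\<Sum>i\<in>A. of_bool (P i))"
  unfolding of_bool_def by (simp add: sum.inter_filter[symmetric])

text \<open>Double counting the cells where L agrees with g, column by column.\<close>
lemma sum_agreement:
  assumes lat: "latin_square n L" and g: "g ` {1..n} \<subseteq> {1..n}"
  shows "(\<Sum>t\<in>{1..n}. agreement n L g t) = n"
proof -
  have "(\<Sum>t\<in>{1..n}. agreement n L g t) = (\<Sum>t\<in>{1..n}. \<Sum>i\<in>{1..n}. of_bool (L t i = g i))"
    unfolding agreement_def by (simp only: card_filter_sum finite_atLeastAtMost)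
  also have "\<dots> = (\<Sum>i\<in>{1..n}. \<Sum>t\<in>{1..n}. of_bool (L t i = g i))"
    by (rule sum.swap)
  also have "\<dots> = (\<Sum>i\<in>{1..n}. card {t \<in> {1..n}. L t i = g i})"
    by (simp only: card_filter_sum finite_atLeastAtMost)
  also have "\<dots> = (\<Sum>i\<in>{1..n}. 1)"
    using g by (intro sum.cong refl latin_column_fiber[OF lat]) (auto simp: image_subset_iff)
  finally show ?thesis by simp
qed

lemma agreement_cells_transversal:
  assumes lat: "latin_square n L" and g: "g permutes {1..n}"
    and le1: "\<And>t. t \<in> {1..n} \<Longrightarrow> agreement n L g t \<le> 1"
  shows "transversal n L {(t, i). t \<in> {1..n} \<and> i \<in> {1..n} \<and> L t i = g i}"
    (is "transversal n L ?T")
proof -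
  have gN: "\<And>i. i \<in> {1..n} \<Longrightarrow> g i \<in> {1..n}"
    using permutes_in_image[OF g] by blast
  have sub: "?T \<subseteq> {1..n} \<times> {1..n}" by auto
  have snd_inj: "inj_on snd ?T"
  proof (rule inj_onI)
    fix x y assume "x \<in> ?T" "y \<in> ?T" "snd x = snd y"
    then obtain t t' i where xy: "x = (t, i)" "y = (t', i)" and
      "t \<in> {1..n}" "t' \<in> {1..n}" "i \<in> {1..n}" "L t i = L t' i"
      by auto
    then have "t = t'"
      using latin_column_bij[OF lat, of i] by (metis bij_betw_def inj_onD)
    then show "x = y" using xy by simp
  qed
  have "snd ` ?T = {1..n}"
  proof (intro equalityI subsetI)
    fix i assume i: "i \<in> {1..n}"
    have "card {t \<in> {1..n}. L t i = g i} = 1"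
      using latin_column_fiber[OF lat i gN[OF i]] .
    then obtain t where "{t \<in> {1..n}. L t i = g i} = {t}"
      by (rule card_1_singletonE)
    then have "(t, i) \<in> ?T" using i by auto
    then show "i \<in> snd ` ?T" by (rule rev_image_eqI) simp
  qed auto
  then have snd_bij: "bij_betw snd ?T {1..n}"
    using snd_inj by (simp add: bij_betw_def)
  then have card_T: "card ?T = n"
    by (simp add: bij_betw_same_card)
  have fst_inj: "inj_on fst ?T"
  proof (rule inj_onI)
    fix x y assume "x \<in> ?T" "y \<in> ?T" "fst x = fst y"
    then obtain t i i' where xy: "x = (t, i)" "y = (t, i')" and t: "t \<in> {1..n}" and
      "i \<in> {i \<in> {1..n}. L t i = g i}" "i' \<in> {i \<in> {1..n}. L t i = g i}"
      by auto
    moreover have "card {i \<in> {1..n}. L t i = g i} \<le> Suc 0"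
      using le1[OF t] by (simp add: agreement_def)
    ultimately show "x = y"
      using card_le_Suc0_iff_eq[of "{i \<in> {1..n}. L t i = g i}"] by simp
  qed
  have "fst ` ?T = {1..n}"
    using card_T card_image[OF fst_inj] sub by (intro card_subset_eq) auto
  then have fst_bij: "bij_betw fst ?T {1..n}"
    using fst_inj by (simp add: bij_betw_def)
  have "inj_on (\<lambda>(r, c). L r c) ?T"
  proof (rule inj_onI)
    fix x y assume x: "x \<in> ?T" and y: "y \<in> ?T" and "(\<lambda>(r, c). L r c) x = (\<lambda>(r, c). L r c) y"
    then have "g (snd x) = g (snd y)" by auto
    then have "snd x = snd y" using permutes_inj[OF g] by (simp add: inj_eq)
    then show "x = y" using snd_inj x y by (simp add: inj_on_eq_iff)
  qed
  then show ?thesis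
    unfolding transversal_def using sub card_T fst_bij snd_bij by blast
qed

lemma row_with_two_agreements:
  assumes "latin_square n L" and "\<not> (\<exists>T. transversal n L T)" and "g permutes {1..n}"
  shows "\<exists>t\<in>{1..n}. 2 \<le> agreement n L g t"
proof (rule ccontr)
  assume "\<not> ?thesis"
  then have "\<And>t. t \<in> {1..n} \<Longrightarrow> agreement n L g t \<le> 1" by force
  then show False using agreement_cells_transversal[OF assms(1,3)] assms(2) by blast
qed

lemma card_filter_remove2:
  assumes "finite A" "c \<in> A" "c' \<in> A" "c \<noteq> c'"
  shows "card {i \<in> A. P i} = card {i \<in> A - {c, c'}. P i} + of_bool (P c) + of_bool (P c')"
proof -
  have "card {i \<in> A. P i} = (\<Sum>i\<in>A. of_bool (P i))"
    by (rule card_filter_sum) (use assms in simp)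
  also have "\<dots> = of_bool (P c) + (\<Sum>i\<in>A - {c}. of_bool (P i))"
    by (rule sum.remove) (use assms in auto)
  also have "(\<Sum>i\<in>A - {c}. of_bool (P i)) = of_bool (P c') + (\<Sum>i\<in>A - {c} - {c'}. of_bool (P i))"
    by (rule sum.remove) (use assms in auto)
  also have "A - {c} - {c'} = A - {c, c'}" by auto
  also have "(\<Sum>i\<in>A - {c, c'}. of_bool (P i)) = card {i \<in> A - {c, c'}. P i}"
    by (rule card_filter_sum[symmetric]) (use assms in simp)
  finally show ?thesis by linarith
qed

lemma agreement_swap:
  assumes "c \<in> {1..n}" "c' \<in> {1..n}" "c \<noteq> c'"
  shows "agreement n L (g \<circ> transpose c c') t + of_bool (L t c = g c) + of_bool (L t c' = g c')
       = agreement n L g t + of_bool (L t c = g c') + of_bool (L t c' = g c)"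
proof -
  let ?h = "g \<circ> transpose c c'"
  have "{i \<in> {1..n} - {c, c'}. L t i = ?h i} = {i \<in> {1..n} - {c, c'}. L t i = g i}" by auto
  then show ?thesis
    using card_filter_remove2[OF _ assms, of "\<lambda>i. L t i = ?h i"]
      card_filter_remove2[OF _ assms, of "\<lambda>i. L t i = g i"] assms
    by (simp add: agreement_def)
qed

text \<open>If row r agrees with g at least three times, the other rows share at most n - 3
  agreements, which bounds the number of rows with one resp. at least two agreements.\<close>
lemma few_agreeing_rows:
  assumes lat: "latin_square n L" and g: "g permutes {1..n}"
    and r: "r \<in> {1..n}" and ar: "3 \<le> agreement n L g r"
  shows "2 * card {t \<in> {1..n}. t \<noteq> r \<and> 2 \<le> agreement n L g t}
         + card {t \<in> {1..n}. agreement n L g t = 1} + 3 \<le> n"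
proof -
  let ?a = "agreement n L g"
  define S2 where "S2 = {t \<in> {1..n}. t \<noteq> r \<and> 2 \<le> ?a t}"
  define N1 where "N1 = {t \<in> {1..n}. ?a t = 1}"
  have "?a r + (sum ?a N1 + sum ?a S2) = sum ?a ({r} \<union> (N1 \<union> S2))"
    using ar by (simp add: sum.union_disjoint S2_def N1_def disjoint_iff)
  also have "\<dots> \<le> sum ?a {1..n}"
    using r by (intro sum_mono2) (auto simp: S2_def N1_def)
  also have "\<dots> = n"
    using sum_agreement[OF lat] permutes_image[OF g] by simp
  finally have "?a r + (sum ?a N1 + sum ?a S2) \<le> n" .
  moreover have "sum ?a N1 = card N1" by (simp add: N1_def)
  moreover have "2 * card S2 \<le> sum ?a S2"
    using sum_mono[of S2 "\<lambda>_. 2" ?a] by (simp add: S2_def)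
  ultimately show ?thesis using ar unfolding S2_def N1_def by linarith
qed

text \<open>A partner c' for the swap such that no row other than r is pushed above two
  agreements: rows with at least two agreements must gain none, rows with one
  agreement must not gain two.  Each such row excludes at most two resp. one c'.\<close>
lemma swap_partner_exists:
  assumes lat: "latin_square n L" and g: "g permutes {1..n}"
    and r: "r \<in> {1..n}" and ar: "3 \<le> agreement n L g r" and c: "c \<in> {1..n}"
  shows "\<exists>c'\<in>{1..n}. c' \<noteq> c \<and> (\<forall>t\<in>{1..n}. t \<noteq> r \<longrightarrow>
           \<not> (2 \<le> agreement n L g t \<and> (L t c = g c' \<or> L t c' = g c)) \<and>
           \<not> (agreement n L g t = 1 \<and> L t c = g c' \<and> L t c' = g c))"
proof -
  let ?a = "agreement n L g"
  define S2 where "S2 = {t \<in> {1..n}. t \<noteq> r \<and> 2 \<le> ?a t}"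
  define N1 where "N1 = {t \<in> {1..n}. ?a t = 1}"
  let ?back = "\<lambda>t. inv g (L t c)" and ?fwd = "\<lambda>t. inv_into {1..n} (L t) (g c)"
  define B where "B = {c' \<in> {1..n}. \<exists>t\<in>{1..n}. t \<noteq> r \<and>
           ((2 \<le> ?a t \<and> (L t c = g c' \<or> L t c' = g c)) \<or>
            (?a t = 1 \<and> L t c = g c' \<and> L t c' = g c))}"
  have "B \<subseteq> ?back ` S2 \<union> ?fwd ` S2 \<union> ?fwd ` N1"
  proof
    fix c' assume "c' \<in> B"
    then obtain t where c': "c' \<in> {1..n}" and t: "t \<in> {1..n}" "t \<noteq> r" and
      bad: "(2 \<le> ?a t \<and> (L t c = g c' \<or> L t c' = g c)) \<or> (?a t = 1 \<and> L t c = g c' \<and> L t c' = g c)"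
      unfolding B_def by blast
    have "L t c = g c' \<Longrightarrow> c' = ?back t" using permutes_inverses(2)[OF g] by simp
    moreover have "L t c' = g c \<Longrightarrow> c' = ?fwd t"
      using inv_into_f_f[OF latin_row_inj[OF lat t(1)] c'] by simp
    ultimately show "c' \<in> ?back ` S2 \<union> ?fwd ` S2 \<union> ?fwd ` N1"
      using bad t unfolding S2_def N1_def by blast
  qed
  then have "card B \<le> card (?back ` S2 \<union> ?fwd ` S2 \<union> ?fwd ` N1)"
    by (intro card_mono) (simp_all add: S2_def N1_def)
  also have "\<dots> \<le> card (?back ` S2) + card (?fwd ` S2) + card (?fwd ` N1)"
    by (meson add_le_mono card_Un_le le_trans order_refl)
  also have "\<dots> \<le> 2 * card S2 + card N1"
  proof -
    have "finite S2" "finite N1" by (simp_all add: S2_def N1_def)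
    then show ?thesis
      using card_image_le[of S2 ?back] card_image_le[of S2 ?fwd] card_image_le[of N1 ?fwd] by linarith
  qed
  also have "\<dots> < card ({1..n} - {c})"
    using few_agreeing_rows[OF lat g r ar] c unfolding S2_def N1_def by simp
  finally have "card B < card ({1..n} - {c})" .
  moreover have "finite B" by (simp add: B_def)
  ultimately have "\<not> {1..n} - {c} \<subseteq> B"
    using card_mono leD by blast
  then show ?thesis unfolding B_def by blast
qed

lemma excess_decrease:
  assumes lat: "latin_square n L" and g: "g permutes {1..n}"
    and r: "r \<in> {1..n}" and ar: "3 \<le> agreement n L g r"
  shows "\<exists>g'. g' permutes {1..n} \<and> excess n L g' < excess n L g"
proof -
  let ?a = "agreement n L g"
  obtain c where c: "c \<in> {1..n}" "L r c = g c"
    using ar unfolding agreement_def by (metis (mono_tags, lifting) Collect_empty_eq card.empty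
        not_numeral_le_zero)
  obtain c' where c': "c' \<in> {1..n}" "c' \<noteq> c" and
    good: "\<And>t. t \<in> {1..n} \<Longrightarrow> t \<noteq> r \<Longrightarrow>
       \<not> (2 \<le> ?a t \<and> (L t c = g c' \<or> L t c' = g c)) \<and>
       \<not> (?a t = 1 \<and> L t c = g c' \<and> L t c' = g c)"
    using swap_partner_exists[OF lat g r ar c(1)] by blast
  define g' where "g' = g \<circ> transpose c c'"
  have g': "g' permutes {1..n}"
    unfolding g'_def using c c' by (intro permutes_compose[OF permutes_swap_id g]) auto
  note swap = agreement_swap[OF c(1) c'(1) c'(2)[symmetric], of L g, folded g'_def]
  have "L r c \<noteq> g c'" using c c' permutes_inj[OF g] by (metis injD)
  moreover have "L r c' \<noteq> g c" using c c' latin_row_inj[OF lat r] by (metis inj_onD)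
  ultimately have less: "agreement n L g' r - 2 < ?a r - 2"
    using swap[of r] c(2) ar by simp
  have "agreement n L g' t - 2 \<le> ?a t - 2" if t: "t \<in> {1..n}" for t
  proof (cases "t = r")
    case False
    then show ?thesis using good[OF t False] swap[of t] by (auto simp: of_bool_def split: if_splits)
  qed (use less in simp)
  then have "excess n L g' < excess n L g"
    unfolding excess_def using less r by (intro sum_strict_mono_ex1) auto
  then show ?thesis using g' by blast
qed

lemma perm_with_few_agreements:
  assumes lat: "latin_square n L"
  shows "\<exists>g. g permutes {1..n} \<and> (\<forall>t\<in>{1..n}. agreement n L g t \<le> 2)"
proof -
  obtain g where g: "g permutes {1..n}"
    and min: "\<And>h. h permutes {1..n} \<Longrightarrow> excess n L g \<le> excess n L h"
    using ex_has_least_nat[of "\<lambda>h. h permutes {1..n}" id "excess n L"] permutes_id by blast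
  have "agreement n L g t \<le> 2" if t: "t \<in> {1..n}" for t
  proof (rule ccontr)
    assume "\<not> agreement n L g t \<le> 2"
    then obtain h where "h permutes {1..n}" "excess n L h < excess n L g"
      using excess_decrease[OF lat g t] by force
    then show False using min by (meson leD)
  qed
  then show ?thesis using g by blast
qed

theorem theorem6p4:
  fixes n :: nat and L :: "nat \<Rightarrow> nat \<Rightarrow> nat"
  assumes "latin_square n L"
    and "\<not> (\<exists>T. transversal n L T)"
  shows "covering_radius n (row_set n L) = n - 2"
  unfolding covering_radius_def
proof (rule Least_equality)
  show "\<forall>g\<in>sym_group n. \<exists>p\<in>row_set n L. hamming n g p \<le> n - 2"
  proof
    fix g assume "g \<in> sym_group n"
    then have "g permutes {1..n}" by (simp add: sym_group_def)
    then obtain t where t: "t \<in> {1..n}" "2 \<le> agreement n L g t"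
      using row_with_two_agreements[OF assms] by blast
    then have "hamming n g (row_perm n L t) \<le> n - 2"
      using hamming_row_perm[OF t(1)] by simp
    then show "\<exists>p\<in>row_set n L. hamming n g p \<le> n - 2"
      using t(1) unfolding row_set_def by blast
  qed
next
  fix d assume covers: "\<forall>g\<in>sym_group n. \<exists>p\<in>row_set n L. hamming n g p \<le> d"
  obtain g where "g permutes {1..n}" and few: "\<forall>t\<in>{1..n}. agreement n L g t \<le> 2"
    using perm_with_few_agreements[OF assms(1)] by blast
  then obtain t where t: "t \<in> {1..n}" "hamming n g (row_perm n L t) \<le> d"
    using covers unfolding sym_group_def row_set_def by auto
  then show "n - 2 \<le> d" using hamming_row_perm[OF t(1)] few by fastforce
qed

end
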